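(* Let $b^2>a^2>0$, $\theta\in[0,1]$, and let $u$ solve $$u_{tt}-a^2\Delta u-(b^2-a^2)\nabla\operatorname{div}u+(-\Delta)^{\theta}u_t=0\ \text{ on }(0,\infty)\times\mathbb{R}^3,\qquad (u,u_t)(0,\cdot)=(u_0,u_1).$$ Let $\hat u(t,\xi)$ be its partial Fourier transform in $x$ and $$E_{\rm pha}(\hat u)(t,\xi):=|\hat u_t(t,\xi)|^2+a^2|\xi|^2|\hat u(t,\xi)|^2+(b^2-a^2)|\xi\cdot\hat u(t,\xi)|^2 .$$ Then for a sufficiently small constant $\varepsilon>0$ there is $c>0$ such that for all $t\ge0$ $$E_{\rm pha}(\hat u)(t,\xi)\lesssim\begin{cases}e^{-c|\xi|^{2\max\{1-\theta;\theta\}}t}E_{\rm pha}(\hat u)(0,\xi)&\text{if }|\xi|<\varepsilon,\\ e^{-ct}E_{\rm pha}(\hat u)(0,\xi)&\text{if }|\xi|\ge\varepsilon.\end{cases}$$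
   Context: $(-\Delta)^\theta$ is the Fourier multiplier with symbol $|\xi|^{2\theta}$; $\xi\cdot\hat u$ is the (bilinear) inner product in $\mathbb{C}^3$. $\lesssim$ hides a constant independent of $t,\xi$ and data. *)

theory Defs
  imports "HOL-Analysis.Analysis"
begin

text \<open>Symbol of the fractional Laplacian (-Delta)^theta, i.e. |xi|^(2 theta),
  with the convention |xi|^0 = 1 (so (-Delta)^0 is the identity).\<close>
definition frac_symbol :: "real \<Rightarrow> real^3 \<Rightarrow> real" where
  "frac_symbol \<theta> \<xi> = (if \<theta> = 0 then 1 else norm \<xi> powr (2 * \<theta>))"

definition bdot :: "real^3 \<Rightarrow> complex^3 \<Rightarrow> complex" where
  "bdot \<xi> v = (\<Sum>i\<in>UNIV. complex_of_real (\<xi> $ i) * v $ i)"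

text \<open>Phase-space energy E_pha(u^)(t,xi) in terms of u^(t,xi) = U and u^_t(t,xi) = V.\<close>
definition E_pha :: "real \<Rightarrow> real \<Rightarrow> real^3 \<Rightarrow> complex^3 \<Rightarrow> complex^3 \<Rightarrow> real" where
  "E_pha a b \<xi> U V = (norm V)\<^sup>2 + a\<^sup>2 * (norm \<xi>)\<^sup>2 * (norm U)\<^sup>2
      + (b\<^sup>2 - a\<^sup>2) * (cmod (bdot \<xi> U))\<^sup>2"

text \<open>Partial Fourier transform (in x) of the damped Lame system at a fixed frequency xi:
  u^_tt + a^2 |xi|^2 u^ + (b^2 - a^2) xi (xi . u^) + |xi|^(2 theta) u^_t = 0.\<close>
definition lame_fourier_rhs ::
  "real \<Rightarrow> real \<Rightarrow> real \<Rightarrow> real^3 \<Rightarrow> complex^3 \<Rightarrow> complex^3 \<Rightarrow> complex^3" where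
  "lame_fourier_rhs a b \<theta> \<xi> U V =
     (\<chi> i. complex_of_real (a\<^sup>2 * (norm \<xi>)\<^sup>2) * U $ i
          + complex_of_real ((b\<^sup>2 - a\<^sup>2) * \<xi> $ i) * bdot \<xi> U
          + complex_of_real (frac_symbol \<theta> \<xi>) * V $ i)"

end

theory Submission
  imports Defs
begin

text \<open>At a fixed frequency \<open>\<xi>\<close> the system is the damped oscillator
  \<open>u'' + A u + d u' = 0\<close> with \<open>A u = \<mu> u + \<beta> \<xi> (\<xi> \<cdot> u)\<close>, \<open>\<mu> = a\<^sup>2 |\<xi>|\<^sup>2\<close>,
  \<open>\<beta> = b\<^sup>2 - a\<^sup>2 \<ge> 0\<close> and \<open>d = |\<xi>|\<^bsup>2\<theta>\<^esup>\<close>. The energy \<open>E = |u'|\<^sup>2 + \<langle>A u, u\<rangle>\<close> is dissipated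
  only through \<open>|u'|\<^sup>2\<close>, so one works with \<open>L = E + 2\<kappa> Re\<langle>u, u'\<rangle>\<close>: for
  \<open>\<kappa> = min (d/2) (\<surd>\<mu>/2) (\<mu>/(2d))\<close> the cross term is at most \<open>E/2\<close> and
  \<open>L' \<le> -\<kappa> E \<le> -(2/3) \<kappa> L\<close>, whence \<open>E(t) \<le> 3 e\<^bsup>-2\<kappa>t/3\<^esup> E(0)\<close>. Finally
  \<open>\<kappa> \<gtrsim> |\<xi>|\<^bsup>2 max(1-\<theta>, \<theta>)\<^esup>\<close> for \<open>|\<xi>| \<le> 1\<close> and \<open>\<kappa> \<gtrsim> \<epsilon>\<^sup>2\<close> for \<open>|\<xi>| \<ge> \<epsilon>\<close>.\<close>

definition damped_energy ::
  "real \<Rightarrow> real \<Rightarrow> ('a::real_inner \<Rightarrow> 'b::real_inner) \<Rightarrow> 'a \<Rightarrow> 'a \<Rightarrow> real" where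
  "damped_energy \<mu> \<beta> B u v = inner v v + \<mu> * inner u u + \<beta> * inner (B u) (B u)"

text \<open>For \<open>d = 0\<close> the last term is the junk value \<open>\<mu> / 0 = 0\<close>, so the rate is \<open>0\<close>.\<close>
definition damping_rate :: "real \<Rightarrow> real \<Rightarrow> real" where
  "damping_rate \<mu> d = min (d / 2) (min (sqrt \<mu> / 2) (\<mu> / (2 * d)))"

definition lyapunov_energy ::
  "real \<Rightarrow> real \<Rightarrow> real \<Rightarrow> ('a::real_inner \<Rightarrow> 'b::real_inner) \<Rightarrow> 'a \<Rightarrow> 'a \<Rightarrow> real" where
  "lyapunov_energy \<kappa> \<mu> \<beta> B u v = damped_energy \<mu> \<beta> B u v + 2 * \<kappa> * inner u v"

definition lyapunov_derivative ::
  "real \<Rightarrow> real \<Rightarrow> real \<Rightarrow> real \<Rightarrow> ('a::real_inner \<Rightarrow> 'b::real_inner) \<Rightarrow> 'a \<Rightarrow> 'a \<Rightarrow> real" where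
  "lyapunov_derivative \<kappa> \<mu> \<beta> d B u v =
     - 2 * d * inner v v
     + 2 * \<kappa> * (inner v v - (\<mu> * inner u u + \<beta> * inner (B u) (B u)) - d * inner u v)"

lemma damped_energy_nonneg: "0 \<le> \<mu> \<Longrightarrow> 0 \<le> \<beta> \<Longrightarrow> 0 \<le> damped_energy \<mu> \<beta> B u v"
  unfolding damped_energy_def by simp

lemma damping_rate_nonneg: "0 \<le> \<mu> \<Longrightarrow> 0 \<le> d \<Longrightarrow> 0 \<le> damping_rate \<mu> d"
  unfolding damping_rate_def by simp

lemma damping_rate_le:
  assumes "0 \<le> \<mu>" "0 \<le> d"
  shows "damping_rate \<mu> d \<le> d / 2" and "damping_rate \<mu> d \<le> sqrt \<mu> / 2"
    and "2 * damping_rate \<mu> d * d \<le> \<mu>"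
proof -
  show "damping_rate \<mu> d \<le> d / 2" "damping_rate \<mu> d \<le> sqrt \<mu> / 2"
    unfolding damping_rate_def by auto
  show "2 * damping_rate \<mu> d * d \<le> \<mu>"
  proof (cases "d = 0")
    case False
    have "damping_rate \<mu> d \<le> \<mu> / (2 * d)"
      unfolding damping_rate_def by auto
    then have "damping_rate \<mu> d * (2 * d) \<le> \<mu>"
      using False assms(2) by (simp add: pos_le_divide_eq)
    then show ?thesis by (simp add: mult_ac)
  qed (simp add: assms)
qed

lemma lyapunov_energy_bounds:
  fixes u v :: "'a::real_inner"
  assumes "0 \<le> \<mu>" "0 \<le> \<beta>" "0 \<le> \<kappa>" "\<kappa> \<le> sqrt \<mu> / 2"
  shows "damped_energy \<mu> \<beta> B u v / 2 \<le> lyapunov_energy \<kappa> \<mu> \<beta> B u v"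
    and "lyapunov_energy \<kappa> \<mu> \<beta> B u v \<le> 3 / 2 * damped_energy \<mu> \<beta> B u v"
proof -
  have "\<bar>2 * \<kappa> * inner u v\<bar> \<le> 2 * \<kappa> * (norm u * norm v)"
    using assms(3) Cauchy_Schwarz_ineq2[of u v] by (simp add: abs_mult mult_left_mono)
  also have "\<dots> \<le> sqrt \<mu> * norm u * norm v"
    using assms(4) mult_right_mono[of "2 * \<kappa>" "sqrt \<mu>" "norm u * norm v"] by (simp add: mult.assoc)
  also have "\<dots> \<le> ((norm v)\<^sup>2 + \<mu> * (norm u)\<^sup>2) / 2"
    using assms(1) sum_squares_bound[of "norm v" "sqrt \<mu> * norm u"]
    by (simp add: power_mult_distrib mult_ac)
  also have "\<dots> \<le> damped_energy \<mu> \<beta> B u v / 2"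
    using assms(2) by (simp add: damped_energy_def power2_norm_eq_inner)
  finally show "damped_energy \<mu> \<beta> B u v / 2 \<le> lyapunov_energy \<kappa> \<mu> \<beta> B u v"
    and "lyapunov_energy \<kappa> \<mu> \<beta> B u v \<le> 3 / 2 * damped_energy \<mu> \<beta> B u v"
    unfolding lyapunov_energy_def by auto
qed

lemma lyapunov_derivative_le:
  fixes u v :: "'a::real_inner"
  assumes "0 \<le> \<beta>" "0 \<le> d" "0 \<le> \<kappa>" "\<kappa> \<le> d / 2" "2 * \<kappa> * d \<le> \<mu>"
  shows "lyapunov_derivative \<kappa> \<mu> \<beta> d B u v \<le> - \<kappa> * damped_energy \<mu> \<beta> B u v"
proof -
  define x y where "x = norm v" and "y = norm u"
  have "- inner u v \<le> x * y"
    using Cauchy_Schwarz_ineq2[of u v] unfolding x_def y_def by (simp add: abs_le_iff mult.commute)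
  then have "- (2 * \<kappa> * d) * inner u v \<le> 2 * \<kappa> * d * (x * y)"
    using assms mult_left_mono[of "- inner u v" "x * y" "2 * \<kappa> * d"] by simp
  also have "\<dots> \<le> d / 2 * x\<^sup>2 + 2 * \<kappa>\<^sup>2 * d * y\<^sup>2"
    using assms(2) mult_left_mono[OF zero_le_power2[of "x - 2 * \<kappa> * y"], of "d / 2"]
    by (simp add: power2_eq_square algebra_simps)
  finally have cross: "- (2 * \<kappa> * d) * inner u v \<le> d / 2 * x\<^sup>2 + 2 * \<kappa>\<^sup>2 * d * y\<^sup>2" .
  have "\<kappa> * (2 * \<kappa> * d) * y\<^sup>2 \<le> \<kappa> * \<mu> * y\<^sup>2"
    using assms by (intro mult_right_mono mult_left_mono) auto
  moreover have "3 * \<kappa> * x\<^sup>2 \<le> 3 / 2 * d * x\<^sup>2"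
    using assms by (intro mult_right_mono) auto
  moreover have "0 \<le> \<kappa> * (\<beta> * inner (B u) (B u))"
    using assms by simp
  ultimately show ?thesis
    using cross unfolding lyapunov_derivative_def damped_energy_def x_def y_def power2_norm_eq_inner
    by (simp add: algebra_simps power2_eq_square)
qed

lemma lyapunov_derivative_le_rate:
  fixes u v :: "'a::real_inner"
  assumes "0 \<le> \<mu>" "0 \<le> \<beta>" "0 \<le> d" and \<rho>: "\<rho> \<le> 2 / 3 * damping_rate \<mu> d"
  shows "lyapunov_derivative (damping_rate \<mu> d) \<mu> \<beta> d B u v
           \<le> - \<rho> * lyapunov_energy (damping_rate \<mu> d) \<mu> \<beta> B u v"
proof -
  define \<kappa> where "\<kappa> = damping_rate \<mu> d"
  have \<kappa>: "0 \<le> \<kappa>" "\<kappa> \<le> d / 2" "\<kappa> \<le> sqrt \<mu> / 2" "2 * \<kappa> * d \<le> \<mu>"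
    unfolding \<kappa>_def using damping_rate_nonneg damping_rate_le assms by auto
  note bounds = lyapunov_energy_bounds[OF assms(1,2) \<kappa>(1,3), of B u v]
  have "lyapunov_derivative \<kappa> \<mu> \<beta> d B u v \<le> - \<kappa> * damped_energy \<mu> \<beta> B u v"
    using lyapunov_derivative_le assms \<kappa> by blast
  also have "\<dots> \<le> - (2 / 3 * \<kappa>) * lyapunov_energy \<kappa> \<mu> \<beta> B u v"
    using mult_left_mono[OF bounds(2) \<kappa>(1)] by simp
  also have "\<dots> \<le> - \<rho> * lyapunov_energy \<kappa> \<mu> \<beta> B u v"
    using bounds(1) damped_energy_nonneg[OF assms(1,2), of B u v] \<rho> unfolding \<kappa>_def
    by (intro mult_right_mono) auto
  finally show ?thesis
    unfolding \<kappa>_def .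
qed

lemma lyapunov_has_real_derivative:
  fixes U V :: "real \<Rightarrow> 'a::real_inner" and B :: "'a \<Rightarrow> 'b::real_inner"
  assumes B: "bounded_linear B"
    and U': "(U has_vector_derivative V s) (at s)"
    and V': "(V has_vector_derivative w) (at s)"
    and eq: "\<And>X. inner w X = - (\<mu> * inner (U s) X + \<beta> * inner (B (U s)) (B X)) - d * inner (V s) X"
  shows "((\<lambda>t. lyapunov_energy \<kappa> \<mu> \<beta> B (U t) (V t)) has_real_derivative
           lyapunov_derivative \<kappa> \<mu> \<beta> d B (U s) (V s)) (at s)"
proof -
  have BU': "((\<lambda>t. B (U t)) has_vector_derivative B (V s)) (at s)"
    by (rule bounded_linear.has_vector_derivative[OF B U'])
  have inner': "((\<lambda>t. inner (f t) (g t)) has_real_derivative inner (f s) g' + inner f' (g s)) (at s)"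
    if "(f has_vector_derivative f') (at s)" "(g has_vector_derivative g') (at s)"
    for f g :: "real \<Rightarrow> 'c::real_inner" and f' g'
    using bounded_bilinear.has_vector_derivative[OF bounded_bilinear_inner that]
    by (simp add: has_real_derivative_iff_has_vector_derivative)
  have "((\<lambda>t. lyapunov_energy \<kappa> \<mu> \<beta> B (U t) (V t)) has_real_derivative
          (inner (V s) w + inner w (V s)) + \<mu> * (inner (U s) (V s) + inner (V s) (U s))
          + \<beta> * (inner (B (U s)) (B (V s)) + inner (B (V s)) (B (U s)))
          + 2 * \<kappa> * (inner (U s) w + inner (V s) (V s))) (at s)"
    unfolding lyapunov_energy_def damped_energy_def by (intro DERIV_add DERIV_cmult inner' U' V' BU')
  moreover note eq[of "V s"] eq[of "U s"]
  ultimately show ?thesis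
    unfolding lyapunov_derivative_def by (simp add: inner_commute algebra_simps)
qed

lemma exp_decay_of_differential_inequality:
  fixes f f' :: "real \<Rightarrow> real"
  assumes cont: "continuous_on {0..} f"
    and deriv: "\<And>s. 0 < s \<Longrightarrow> (f has_real_derivative f' s) (at s)"
    and ineq: "\<And>s. 0 < s \<Longrightarrow> f' s \<le> - \<rho> * f s"
    and t: "0 \<le> t"
  shows "f t \<le> exp (- \<rho> * t) * f 0"
proof -
  define g where "g s = exp (\<rho> * s) * f s" for s
  have "\<exists>D. (g has_real_derivative D) (at s) \<and> D \<le> 0" if "0 < s" for s
  proof (intro exI conjI)
    show "(g has_real_derivative exp (\<rho> * s) * (f' s + \<rho> * f s)) (at s)"
      unfolding g_def[abs_def] using deriv[OF that]
      by (auto intro!: derivative_eq_intros simp: algebra_simps)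
    show "exp (\<rho> * s) * (f' s + \<rho> * f s) \<le> 0"
      using ineq[OF that] by (simp add: mult_nonneg_nonpos)
  qed
  moreover have "continuous_on {0..t} g"
    unfolding g_def using continuous_on_subset[OF cont]
    by (intro continuous_intros) auto
  ultimately have "g t \<le> g 0"
    using DERIV_nonpos_imp_decreasing_open[OF t] by blast
  then show ?thesis
    unfolding g_def by (simp add: exp_minus field_simps)
qed

text \<open>The equation \<open>v' = -(\<mu> u + \<beta> B\<^sup>* B u) - d v\<close> is imposed weakly, against every test
  vector \<open>X\<close>, so that no adjoint of \<open>B\<close> is needed.\<close>
lemma damped_energy_decay:
  fixes U V W :: "real \<Rightarrow> 'a::real_inner" and B :: "'a \<Rightarrow> 'b::real_inner"
  assumes B: "bounded_linear B" and pars: "0 \<le> \<mu>" "0 \<le> \<beta>" "0 \<le> d"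
    and U': "\<forall>t\<ge>0. (U has_vector_derivative V t) (at t within {0..})"
    and V_cont: "continuous_on {0..} V"
    and V': "\<forall>t>0. (V has_vector_derivative W t) (at t)"
    and eq: "\<forall>t>0. \<forall>X. inner (W t) X
                 = - (\<mu> * inner (U t) X + \<beta> * inner (B (U t)) (B X)) - d * inner (V t) X"
    and \<rho>: "\<rho> \<le> 2 / 3 * damping_rate \<mu> d"
    and t: "0 \<le> t"
  shows "damped_energy \<mu> \<beta> B (U t) (V t) \<le> 3 * exp (- \<rho> * t) * damped_energy \<mu> \<beta> B (U 0) (V 0)"
proof -
  define \<kappa> where "\<kappa> = damping_rate \<mu> d"
  define E where "E s = damped_energy \<mu> \<beta> B (U s) (V s)" for s
  define L where "L s = lyapunov_energy \<kappa> \<mu> \<beta> B (U s) (V s)" for s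
  have L_E: "E s / 2 \<le> L s" "L s \<le> 3 / 2 * E s" for s
    unfolding L_def E_def \<kappa>_def using pars
    by (intro lyapunov_energy_bounds damping_rate_nonneg damping_rate_le; simp)+
  have U_cont: "continuous_on {0..} U"
    using U' by (auto intro: has_vector_derivative_continuous simp: continuous_on_eq_continuous_within)
  have "continuous_on {0..} L"
    unfolding L_def lyapunov_energy_def damped_energy_def
    using U_cont V_cont continuous_on_compose[OF U_cont linear_continuous_on[OF B]]
    by (intro continuous_intros) (auto simp: o_def)
  moreover have "(L has_real_derivative lyapunov_derivative \<kappa> \<mu> \<beta> d B (U s) (V s)) (at s)"
    if "0 < s" for s
  proof -
    have "at s within {0..} = at s"
      using that by (intro at_within_interior) auto
    then have "(U has_vector_derivative V s) (at s)"
      using U' that by (metis less_imp_le)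
    then show ?thesis
      unfolding L_def[abs_def] using that V' eq by (intro lyapunov_has_real_derivative[OF B]) auto
  qed
  moreover have "lyapunov_derivative \<kappa> \<mu> \<beta> d B (U s) (V s) \<le> - \<rho> * L s" for s
    unfolding L_def \<kappa>_def using lyapunov_derivative_le_rate[OF pars \<rho>] .
  ultimately have "L t \<le> exp (- \<rho> * t) * L 0"
    by (intro exp_decay_of_differential_inequality[OF _ _ _ t])
  then have "E t \<le> 2 * exp (- \<rho> * t) * L 0"
    using L_E(1)[of t] by simp
  also have "\<dots> \<le> 3 * exp (- \<rho> * t) * E 0"
    using L_E(2)[of 0] by simp
  finally show ?thesis
    unfolding E_def .
qed

lemma bounded_linear_bdot: "bounded_linear (bdot \<xi>)"
  unfolding bdot_def
  by (intro bounded_linear_sum bounded_linear_compose[OF bounded_linear_mult_right bounded_linear_vec_nth])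

lemma inner_bdot_bdot: "inner (bdot \<xi> U) (bdot \<xi> X) = (\<Sum>i\<in>UNIV. \<xi> $ i * inner (bdot \<xi> U) (X $ i))"
  unfolding bdot_def[of \<xi> X] by (simp add: inner_sum_right inner_mult_right)

lemma inner_lame_fourier_rhs:
  "inner (lame_fourier_rhs a b \<theta> \<xi> U V) X = a\<^sup>2 * (norm \<xi>)\<^sup>2 * inner U X
     + (b\<^sup>2 - a\<^sup>2) * inner (bdot \<xi> U) (bdot \<xi> X) + frac_symbol \<theta> \<xi> * inner V X"
  unfolding inner_bdot_bdot lame_fourier_rhs_def inner_vec_def[of "vec_lambda _"] vec_lambda_beta
    inner_add_left inner_mult_left
  by (simp add: inner_vec_def sum.distrib sum_distrib_left mult_ac)

lemma E_pha_eq_damped_energy: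
  "E_pha a b \<xi> U V = damped_energy (a\<^sup>2 * (norm \<xi>)\<^sup>2) (b\<^sup>2 - a\<^sup>2) (bdot \<xi>) U V"
  unfolding E_pha_def damped_energy_def by (simp add: power2_norm_eq_inner)

lemma lame_fourier_energy_decay:
  fixes \<xi> :: "real^3" and U V W :: "real \<Rightarrow> complex^3"
  assumes ab: "a\<^sup>2 \<le> b\<^sup>2"
    and U': "\<forall>t\<ge>0. (U has_vector_derivative V t) (at t within {0..})"
    and V_cont: "continuous_on {0..} V"
    and V': "\<forall>t>0. (V has_vector_derivative W t) (at t)"
    and eq: "\<forall>t>0. W t + lame_fourier_rhs a b \<theta> \<xi> (U t) (V t) = 0"
    and \<rho>: "\<rho> \<le> 2 / 3 * damping_rate (a\<^sup>2 * (norm \<xi>)\<^sup>2) (frac_symbol \<theta> \<xi>)"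
    and t: "0 \<le> t"
  shows "E_pha a b \<xi> (U t) (V t) \<le> 3 * exp (- \<rho> * t) * E_pha a b \<xi> (U 0) (V 0)"
  unfolding E_pha_eq_damped_energy
proof (rule damped_energy_decay[OF bounded_linear_bdot _ _ _ U' V_cont V' _ \<rho> t])
  show "0 \<le> a\<^sup>2 * (norm \<xi>)\<^sup>2" "0 \<le> b\<^sup>2 - a\<^sup>2" "0 \<le> frac_symbol \<theta> \<xi>"
    using ab by (auto simp: frac_symbol_def)
  show "\<forall>t>0. \<forall>X. inner (W t) X = - (a\<^sup>2 * (norm \<xi>)\<^sup>2 * inner (U t) X
          + (b\<^sup>2 - a\<^sup>2) * inner (bdot \<xi> (U t)) (bdot \<xi> X)) - frac_symbol \<theta> \<xi> * inner (V t) X"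
    using eq by (auto simp: eq_neg_iff_add_eq_0[symmetric] inner_lame_fourier_rhs)
qed

lemma damping_rate_lower_bound:
  fixes r P :: real
  assumes r: "0 < r"
    and P: "0 \<le> P" "P \<le> r powr (2 * \<theta>)" "P \<le> r" "P \<le> r powr (2 - 2 * \<theta>)"
  shows "min 1 (a\<^sup>2) / 2 * P \<le> damping_rate (a\<^sup>2 * r\<^sup>2) (r powr (2 * \<theta>))"
proof -
  define A where "A = min 1 (a\<^sup>2) / 2"
  have "min 1 (a\<^sup>2) \<le> \<bar>a\<bar>"
  proof (cases "\<bar>a\<bar> \<le> 1")
    case True
    then have "\<bar>a\<bar>\<^sup>2 \<le> \<bar>a\<bar>"
      using mult_left_le_one_le[of "\<bar>a\<bar>" "\<bar>a\<bar>"] by (simp add: power2_eq_square)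
    then show ?thesis by simp
  qed auto
  then have A: "0 \<le> A" "A \<le> 1 / 2" "A \<le> \<bar>a\<bar> / 2" "A \<le> a\<^sup>2 / 2"
    unfolding A_def by auto
  have "sqrt (a\<^sup>2 * r\<^sup>2) = \<bar>a\<bar> * r"
    using r by (simp add: real_sqrt_mult)
  moreover have "a\<^sup>2 * r\<^sup>2 / (2 * r powr (2 * \<theta>)) = a\<^sup>2 / 2 * r powr (2 - 2 * \<theta>)"
  proof -
    have "r powr (2 - 2 * \<theta>) = r\<^sup>2 / r powr (2 * \<theta>)"
      using r by (simp add: powr_diff)
    then show ?thesis by simp
  qed
  moreover have "A * P \<le> 1 / 2 * r powr (2 * \<theta>)" "A * P \<le> \<bar>a\<bar> / 2 * r"
      "A * P \<le> a\<^sup>2 / 2 * r powr (2 - 2 * \<theta>)"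
    using A P by (intro mult_mono; simp)+
  ultimately show ?thesis
    unfolding A_def[symmetric] damping_rate_def by simp
qed

lemma damping_rate_low_frequency:
  fixes \<xi> :: "real^3"
  assumes \<xi>: "norm \<xi> \<le> 1"
  shows "min 1 (a\<^sup>2) / 2 * norm \<xi> powr (2 * max (1 - \<theta>) \<theta>)
           \<le> damping_rate (a\<^sup>2 * (norm \<xi>)\<^sup>2) (frac_symbol \<theta> \<xi>)"
proof (cases "\<xi> = 0")
  case True
  then show ?thesis
    by (simp add: damping_rate_nonneg frac_symbol_def)
next
  case False
  define r where "r = norm \<xi>"
  have r: "0 < r" "r \<le> 1"
    using False \<xi> unfolding r_def by auto
  have mono: "r powr (2 * max (1 - \<theta>) \<theta>) \<le> r powr e"
    if "e \<le> 2 * max (1 - \<theta>) \<theta>" for e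
    using r that by (intro powr_mono') auto
  have "frac_symbol \<theta> \<xi> = r powr (2 * \<theta>)"
    using r unfolding r_def frac_symbol_def by auto
  moreover have "r powr (2 * max (1 - \<theta>) \<theta>) \<le> r powr (2 * \<theta>)"
      "r powr (2 * max (1 - \<theta>) \<theta>) \<le> r"
      "r powr (2 * max (1 - \<theta>) \<theta>) \<le> r powr (2 - 2 * \<theta>)"
    using mono[of "2 * \<theta>"] mono[of 1] mono[of "2 - 2 * \<theta>"] r by (auto simp: max_def)
  ultimately show ?thesis
    using damping_rate_lower_bound[OF r(1)] unfolding r_def by simp
qed

lemma power2_le_powr:
  fixes r e \<epsilon> :: real
  assumes "0 < \<epsilon>" "\<epsilon> \<le> 1" "\<epsilon> \<le> r" "0 \<le> e" "e \<le> 2"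
  shows "\<epsilon>\<^sup>2 \<le> r powr e"
proof (cases "1 \<le> r")
  case True
  have "\<epsilon>\<^sup>2 \<le> 1"
    using assms by (simp add: power_le_one)
  also have "1 \<le> r powr e"
    using True assms by (simp add: ge_one_powr_ge_zero)
  finally show ?thesis .
next
  case False
  have "\<epsilon>\<^sup>2 \<le> r\<^sup>2"
    using assms by (intro power_mono) auto
  also have "\<dots> = r powr 2"
    using assms by simp
  also have "\<dots> \<le> r powr e"
    using False assms by (intro powr_mono') auto
  finally show ?thesis .
qed

lemma damping_rate_high_frequency:
  fixes \<xi> :: "real^3"
  assumes \<epsilon>: "0 < \<epsilon>" "\<epsilon> \<le> 1" "\<epsilon> \<le> norm \<xi>" and \<theta>: "0 \<le> \<theta>" "\<theta> \<le> 1"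
  shows "min 1 (a\<^sup>2) / 2 * \<epsilon>\<^sup>2 \<le> damping_rate (a\<^sup>2 * (norm \<xi>)\<^sup>2) (frac_symbol \<theta> \<xi>)"
proof -
  define r where "r = norm \<xi>"
  have r: "0 < r" "\<epsilon> \<le> r"
    using \<epsilon> unfolding r_def by auto
  have "frac_symbol \<theta> \<xi> = r powr (2 * \<theta>)"
    using r unfolding r_def frac_symbol_def by auto
  moreover have "\<epsilon>\<^sup>2 \<le> \<epsilon>"
    using \<epsilon> by (simp add: power2_eq_square mult_left_le_one_le)
  ultimately show ?thesis
    using damping_rate_lower_bound[OF r(1)] power2_le_powr[OF \<epsilon>(1,2) r(2)] r \<theta> unfolding r_def
    by simp
qed

lemma lame_fourier_energy_decay_by_frequency:
  fixes \<xi> :: "real^3" and U V W :: "real \<Rightarrow> complex^3"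
  assumes ab: "a\<^sup>2 \<le> b\<^sup>2" and \<theta>: "0 \<le> \<theta>" "\<theta> \<le> 1" and \<epsilon>: "0 < \<epsilon>" "\<epsilon> \<le> 1"
    and U': "\<forall>t\<ge>0. (U has_vector_derivative V t) (at t within {0..})"
    and V_cont: "continuous_on {0..} V"
    and V': "\<forall>t>0. (V has_vector_derivative W t) (at t)"
    and eq: "\<forall>t>0. W t + lame_fourier_rhs a b \<theta> \<xi> (U t) (V t) = 0"
    and t: "0 \<le> t"
  shows "(norm \<xi> < \<epsilon> \<longrightarrow> E_pha a b \<xi> (U t) (V t)
            \<le> 3 * exp (- (min 1 (a\<^sup>2) / 3 * \<epsilon>\<^sup>2) * norm \<xi> powr (2 * max (1 - \<theta>) \<theta>) * t)
                * E_pha a b \<xi> (U 0) (V 0))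
       \<and> (\<epsilon> \<le> norm \<xi> \<longrightarrow> E_pha a b \<xi> (U t) (V t)
            \<le> 3 * exp (- (min 1 (a\<^sup>2) / 3 * \<epsilon>\<^sup>2) * t) * E_pha a b \<xi> (U 0) (V 0))"
proof (intro conjI impI)
  assume "norm \<xi> < \<epsilon>"
  define P where "P = norm \<xi> powr (2 * max (1 - \<theta>) \<theta>)"
  have "\<epsilon>\<^sup>2 * P \<le> P"
    using \<epsilon> unfolding P_def by (simp add: mult_left_le_one_le power_le_one)
  then have "min 1 (a\<^sup>2) / 3 * \<epsilon>\<^sup>2 * P \<le> 2 / 3 * (min 1 (a\<^sup>2) / 2 * P)"
    using mult_left_mono[of "\<epsilon>\<^sup>2 * P" P "min 1 (a\<^sup>2) / 3"] by (simp add: mult_ac)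
  also have "\<dots> \<le> 2 / 3 * damping_rate (a\<^sup>2 * (norm \<xi>)\<^sup>2) (frac_symbol \<theta> \<xi>)"
    using damping_rate_low_frequency[of \<xi> a \<theta>] \<open>norm \<xi> < \<epsilon>\<close> \<epsilon> unfolding P_def by simp
  finally have "min 1 (a\<^sup>2) / 3 * \<epsilon>\<^sup>2 * P
      \<le> 2 / 3 * damping_rate (a\<^sup>2 * (norm \<xi>)\<^sup>2) (frac_symbol \<theta> \<xi>)" .
  from lame_fourier_energy_decay[OF ab U' V_cont V' eq this t]
  show "E_pha a b \<xi> (U t) (V t)
          \<le> 3 * exp (- (min 1 (a\<^sup>2) / 3 * \<epsilon>\<^sup>2) * norm \<xi> powr (2 * max (1 - \<theta>) \<theta>) * t)
              * E_pha a b \<xi> (U 0) (V 0)"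
    unfolding P_def by (simp only: minus_mult_left)
next
  assume "\<epsilon> \<le> norm \<xi>"
  from damping_rate_high_frequency[OF \<epsilon> this \<theta>, where a = a]
  have "min 1 (a\<^sup>2) / 3 * \<epsilon>\<^sup>2 \<le> 2 / 3 * damping_rate (a\<^sup>2 * (norm \<xi>)\<^sup>2) (frac_symbol \<theta> \<xi>)"
    by simp
  from lame_fourier_energy_decay[OF ab U' V_cont V' eq this t]
  show "E_pha a b \<xi> (U t) (V t)
          \<le> 3 * exp (- (min 1 (a\<^sup>2) / 3 * \<epsilon>\<^sup>2) * t) * E_pha a b \<xi> (U 0) (V 0)" .
qed

theorem lemma3p1:
  fixes a b \<theta> :: real
  assumes ab: "b\<^sup>2 > a\<^sup>2" "a\<^sup>2 > 0"
    and \<theta>: "0 \<le> \<theta>" "\<theta> \<le> 1"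
  shows "\<exists>\<epsilon>0>0. \<forall>\<epsilon>. 0 < \<epsilon> \<and> \<epsilon> \<le> \<epsilon>0 \<longrightarrow>
    (\<exists>c>0. \<exists>C>0. \<forall>(\<xi>::real^3) (U::real \<Rightarrow> complex^3) V W.
      ((\<forall>t\<ge>0. (U has_vector_derivative V t) (at t within {0..}))
       \<and> continuous_on {0..} V
       \<and> (\<forall>t>0. (V has_vector_derivative W t) (at t))
       \<and> (\<forall>t>0. W t + lame_fourier_rhs a b \<theta> \<xi> (U t) (V t) = 0))
      \<longrightarrow> (\<forall>t\<ge>0.
            (norm \<xi> < \<epsilon> \<longrightarrow>
               E_pha a b \<xi> (U t) (V t)
                 \<le> C * exp (- c * norm \<xi> powr (2 * max (1 - \<theta>) \<theta>) * t) * E_pha a b \<xi> (U 0) (V 0))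
          \<and> (norm \<xi> \<ge> \<epsilon> \<longrightarrow>
               E_pha a b \<xi> (U t) (V t) \<le> C * exp (- c * t) * E_pha a b \<xi> (U 0) (V 0))))"
proof (rule exI[of _ "1::real"], intro conjI zero_less_one allI impI, goal_cases)
  case (1 \<epsilon>)
  then have c: "0 < min 1 (a\<^sup>2) / 3 * \<epsilon>\<^sup>2"
    using ab(2) by simp
  show ?case
    by (rule exI[of _ "min 1 (a\<^sup>2) / 3 * \<epsilon>\<^sup>2"], rule conjI[OF c], rule exI[of _ "3::real"],
        rule conjI[OF zero_less_numeral])
      (use lame_fourier_energy_decay_by_frequency[OF less_imp_le[OF ab(1)] \<theta>] 1 in blast)
qed

end
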